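(* Let $\kappa\in(0,1)$ and $w\in\mathbb{R}$, and let \[ f_{\kappa,w}(\lambda)=\frac{c_1(\kappa)}{2}\Big(K_{\frac{\kappa-1}{2}}(|\lambda+w|)\,|\lambda+w|^{\frac{\kappa-1}{2}}+K_{\frac{\kappa-1}{2}}(|\lambda-w|)\,|\lambda-w|^{\frac{\kappa-1}{2}}\Big),\qquad \lambda\in\mathbb{R}\setminus\{w,-w\}. \] Then there is a function $\theta_\kappa:[0,\infty)\to\mathbb{R}$ such that for all $\lambda\in\mathbb{R}\setminus\{w,-w\}$ \[ f_{\kappa,w}(\lambda)=\frac{c_2(\kappa)}{2}\left(\frac{1-\theta_\kappa(|\lambda+w|)}{|\lambda+w|^{1-\kappa}}+\frac{1-\theta_\kappa(|\lambda-w|)}{|\lambda-w|^{1-\kappa}}\right), \] and $\theta_\kappa$ is bounded on $[0,\infty)$, satisfies $\theta_\kappa(u)\le 1$ for all $u\in[0,\infty)$, and \[ \theta_\kappa(u)=\frac{\Gamma\left(\frac{\kappa+1}{2}\right)}{2^{1-\kappa}\Gamma\left(\frac{3-\kappa}{2}\right)}|u|^{1-\kappa}-\frac{1}{2(\kappa+1)}|u|^2+o(|u|^2),\qquad u\to0. \] Moreover, for $w=0$, \[ f_{\kappa,0}(\lambda)\sim \frac{c_1(\kappa)\sqrt{\pi}}{\sqrt 2}\,|\lambda|^{\frac{\kappa-2}{2}}e^{-|\lambda|},\qquad |\lambda|\to\infty. \]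
   Context: $K_\nu$ denotes the modified Bessel function of the second kind of order $\nu$, and $\Gamma$ the Gamma function. The constants are $c_1(\kappa)=\dfrac{2^{\frac{1-\kappa}{2}}}{\sqrt{\pi}\,\Gamma(\kappa/2)}$ and $c_2(\kappa)=\big(2\Gamma(\kappa)\cos(\kappa\pi/2)\big)^{-1}$. For $w\neq0$, $f_{\kappa,w}$ is the spectral density of the covariance function $r(x)=\cos(wx)/(1+x^2)^{\kappa/2}$ on $\mathbb{R}$. *)

theory Defs
  imports "HOL-Analysis.Analysis" "HOL-Library.Landau_Symbols"
begin

text \<open>Modified Bessel function of the second kind, via the standard integral
  representation K_nu(x) = integral over [0,inf) of exp(-x cosh t) cosh(nu t), for x > 0.\<close>
definition besselK :: "real \<Rightarrow> real \<Rightarrow> real" where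
  "besselK nu x = integral {0..} (\<lambda>t. exp (- x * cosh t) * cosh (nu * t))"

definition c1 :: "real \<Rightarrow> real" where
  "c1 kappa = 2 powr ((1 - kappa) / 2) / (sqrt pi * Gamma (kappa / 2))"

definition c2 :: "real \<Rightarrow> real" where
  "c2 kappa = 1 / (2 * Gamma kappa * cos (kappa * pi / 2))"

definition f_dens :: "real \<Rightarrow> real \<Rightarrow> real \<Rightarrow> real" where
  "f_dens kappa w lam = c1 kappa / 2 *
     (besselK ((kappa - 1) / 2) \<bar>lam + w\<bar> * \<bar>lam + w\<bar> powr ((kappa - 1) / 2)
    + besselK ((kappa - 1) / 2) \<bar>lam - w\<bar> * \<bar>lam - w\<bar> powr ((kappa - 1) / 2))"

end

theory Submission
  imports Defs "HOL-Probability.Distributions" "HOL-Real_Asymp.Real_Asymp"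
begin

text \<open>
  Put \<open>m = (1 - \<kappa>)/2\<close> and \<open>G a y = \<integral>\<^sub>0\<^sup>\<infinity> t\<^sup>a\<^sup>-\<^sup>1 exp (-t - y/t) dt\<close> (\<open>damped_Gamma\<close>),
  so that \<open>G a 0 = \<Gamma> a\<close>. Substituting \<open>t = (x/2) exp (\<plusminus>s)\<close> in the integral defining \<open>K\<^sub>a\<close>
  gives \<open>K\<^sub>a(x) = (x/2)\<^sup>-\<^sup>a G a (x\<^sup>2/4) / 2\<close>, and since \<open>K\<^sub>a\<close> is even in \<open>a\<close>, \<open>G a y = y\<^sup>a G (-a) y\<close>.
  So each summand of \<open>f\<close> has the claimed shape with \<open>\<theta>(u) = 1 - G m (u\<^sup>2/4) / \<Gamma> m\<close>, after
  checking \<open>c\<^sub>1 2\<^sup>m\<^sup>-\<^sup>1 \<Gamma> m = c\<^sub>2\<close> with the reflection and duplication formulas; and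
  \<open>0 \<le> G m y \<le> \<Gamma> m\<close> gives \<open>0 \<le> \<theta> \<le> 1\<close>.

  Differentiating in \<open>y\<close> gives \<open>\<Gamma> a - G a x = \<integral>\<^sub>0\<^sup>x G (a-1)\<close>. Starting from
  \<open>G (-b) s = s\<^sup>-\<^sup>b G b s \<sim> \<Gamma> b s\<^sup>-\<^sup>b\<close> and integrating twice, with the symmetry applied in
  between, one gets \<open>\<Gamma> m - G m y = \<Gamma> (1-m) y\<^sup>m / m - \<Gamma> m y / (1-m) + o(y)\<close>, which is the
  expansion of \<open>\<theta>\<close>. Finally, Laplace's method (substituting \<open>s = \<surd>(2/x) v\<close>, then dominated
  convergence) gives \<open>\<surd>x e\<^sup>x K\<^sub>a(x) \<rightarrow> \<surd>(\<pi>/2)\<close>, the asymptotics of \<open>f\<close> for \<open>w = 0\<close>.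
\<close>

lemma Gamma_has_integral_greaterThan:
  fixes a :: real assumes "0 < a"
  shows "((\<lambda>t. t powr (a-1) / exp t) has_integral Gamma a) {0<..}"
proof -
  have "((\<lambda>t. t powr (a-1) / exp t) has_integral Gamma a) {0..}"
    using Gamma_integral_real assms .
  moreover have "{0..} - {0<..} = {0::real}" "{0<..} - {0..} = ({}::real set)" by auto
  ultimately show ?thesis
    by (subst has_integral_spike_set_eq[of _ "{0..}"]) (auto intro: negligible_subset[of "{0}"])
qed

lemma Gamma_reflection_real:
  fixes m :: real assumes "0 < m" "m < 1"
  shows "Gamma m * Gamma (1 - m) = pi / sin (pi * m)"
proof -
  have "Gamma (complex_of_real m) * Gamma (1 - complex_of_real m) = of_real pi / sin (of_real pi * of_real m)"
    by (rule Gamma_reflection_complex)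
  also have "Gamma (complex_of_real m) * Gamma (1 - complex_of_real m) = of_real (Gamma m * Gamma (1 - m))"
    by (simp add: Gamma_complex_of_real[symmetric])
  also have "of_real pi / sin (of_real pi * of_real m) = complex_of_real (pi / sin (pi * m))"
    by (simp add: sin_of_real[symmetric])
  finally show ?thesis by (simp only: of_real_eq_iff)
qed

lemma Gamma_legendre_duplication_real:
  fixes z :: real assumes "0 < z"
  shows "Gamma z * Gamma (z + 1/2) = 2 powr (1 - 2*z) * sqrt pi * Gamma (2*z)"
proof -
  have "complex_of_real z \<notin> \<int>\<^sub>\<le>\<^sub>0" "complex_of_real z + 1/2 \<notin> \<int>\<^sub>\<le>\<^sub>0"
    using assms by (auto elim!: nonpos_Ints_cases simp: complex_eq_iff)
  from Gamma_legendre_duplication[OF this]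
  have "of_real (Gamma z * Gamma (z + 1/2))
      = complex_of_real (exp ((1 - 2*z) * ln 2) * sqrt pi * Gamma (2*z))"
    by (simp add: Gamma_complex_of_real[symmetric] exp_of_real[symmetric])
  thus ?thesis by (simp only: of_real_eq_iff powr_def) simp
qed

lemma powr_le_exp:
  fixes b z :: real assumes "0 < b" "0 \<le> z"
  shows "z powr b \<le> b powr b * exp z"
proof -
  have "z / b \<le> exp (z / b)" using exp_ge_add_one_self[of "z/b"] by linarith
  hence "(z / b) powr b \<le> exp (z / b) powr b" using assms by (intro powr_mono2) auto
  thus ?thesis using assms by (simp add: powr_divide exp_powr_real field_simps)
qed

lemma one_minus_exp_neg_le_powr:
  fixes b z :: real assumes "0 \<le> z" "0 < b" "b \<le> 1"
  shows "1 - exp (-z) \<le> z powr b"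
proof (cases "z \<le> 1")
  case True
  have "1 - exp (-z) \<le> z" using exp_ge_add_one_self[of "-z"] by linarith
  also have "z \<le> z powr b"
    using True assms powr_mono'[of b 1 z] by simp
  finally show ?thesis .
next
  case False
  have "1 - exp (-z) \<le> 1" by simp
  also have "1 \<le> z powr b" using False assms by (intro ge_one_powr_ge_zero) auto
  finally show ?thesis .
qed

lemma one_plus_square_half_le_cosh: "1 + x^2/2 \<le> cosh (x::real)"
proof -
  have "(\<Sum>n\<in>{0,1,2}. (if even n then x ^ n /\<^sub>R fact n else 0))
      \<le> (\<Sum>n. if even n then x ^ n /\<^sub>R fact n else 0)"
    by (rule sum_le_suminf) (use cosh_converges[of x] in \<open>auto simp: sums_iff zero_le_even_power\<close>)
  thus ?thesis using cosh_converges[of x] by (simp add: sums_iff eval_nat_numeral)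
qed

lemma cosh_le_exp_abs: "cosh (x::real) \<le> exp \<bar>x\<bar>"
  unfolding cosh_field_def by (cases "0 \<le> x") auto

lemma image_mult_exp_atLeast_0:
  fixes c :: real assumes "0 < c"
  shows "(\<lambda>s. c * exp s) ` {0..} = {c..}"
proof
  show "{c..} \<subseteq> (\<lambda>s. c * exp s) ` {0..}"
  proof
    fix t :: real assume "t \<in> {c..}"
    hence "t = c * exp (ln (t/c))" "ln (t/c) \<in> {0..}" using assms by auto
    thus "t \<in> (\<lambda>s. c * exp s) ` {0..}" by blast
  qed
qed (use assms in auto)

lemma image_mult_exp_neg_atLeast_0:
  fixes c :: real assumes "0 < c"
  shows "(\<lambda>s. c * exp (- s)) ` {0..} = {0<..c}"
proof
  show "{0<..c} \<subseteq> (\<lambda>s. c * exp (- s)) ` {0..}"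
  proof
    fix t :: real assume "t \<in> {0<..c}"
    hence "t = c * exp (- ln (c/t))" "ln (c/t) \<in> {0..}" using assms by (auto simp: exp_minus)
    thus "t \<in> (\<lambda>s. c * exp (- s)) ` {0..}" by blast
  qed
qed (use assms in \<open>auto simp: exp_minus field_simps\<close>)

lemma has_integral_greaterThanLessThan_iff:
  fixes f :: "real \<Rightarrow> 'b::banach"
  shows "(f has_integral I) {a<..<b} \<longleftrightarrow> (f has_integral I) {a..b}"
  by (metis has_integral_open_interval box_real(1) cbox_interval)

lemma has_integral_smallo:
  fixes g p I P :: "real \<Rightarrow> real" and d :: real
  assumes d: "0 < d"
    and g: "\<And>x. 0 < x \<Longrightarrow> x < d \<Longrightarrow> (g has_integral I x) {0<..<x}"
    and p: "\<And>x. 0 < x \<Longrightarrow> x < d \<Longrightarrow> (p has_integral P x) {0<..<x}"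
    and p_nonneg: "\<And>s. 0 < s \<Longrightarrow> 0 \<le> p s"
    and small: "g \<in> o[at_right 0](p)"
  shows "I \<in> o[at_right 0](P)"
proof (rule landau_o.smallI)
  fix c :: real assume c: "0 < c"
  from landau_o.smallD[OF small c]
  obtain b where b: "0 < b" "\<And>s. 0 < s \<Longrightarrow> s < b \<Longrightarrow> \<bar>g s\<bar> \<le> c * \<bar>p s\<bar>"
    by (auto simp: eventually_at_right_field)
  show "\<forall>\<^sub>F x in at_right 0. norm (I x) \<le> c * norm (P x)"
    unfolding eventually_at_right_field
  proof (intro exI[of _ "min b d"] conjI allI impI)
    show "0 < min b d" using b d by simp
    fix x :: real assume x: "0 < x" "x < min b d"
    have upper: "g s \<le> c * p s" and lower: "- (c * p s) \<le> g s" if "s \<in> {0<..<x}" for s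
      using b(2)[of s] p_nonneg[of s] that x by auto
    have gI: "(g has_integral I x) {0<..<x}" using g x by simp
    have pI: "(p has_integral P x) {0<..<x}" using p x by simp
    hence cP: "((\<lambda>s. c * p s) has_integral c * P x) {0<..<x}"
      by (rule has_integral_mult_right)
    have "I x \<le> c * P x"
      by (rule has_integral_le[OF gI cP upper])
    moreover have "- (c * P x) \<le> I x"
      by (rule has_integral_le[OF has_integral_neg[OF cP] gI lower])
    moreover have "0 \<le> P x"
      by (rule has_integral_nonneg[OF pI]) (simp add: p_nonneg)
    ultimately show "norm (I x) \<le> c * norm (P x)" by simp
  qed
qed

lemma integral_exp_neg_square_atLeast_0: "integral {0..} (\<lambda>v::real. exp (- (v^2))) = sqrt pi / 2"
proof -
  have hb: "has_bochner_integral lborel (\<lambda>x. indicator {0..} x *\<^sub>R exp (- x\<^sup>2)) (sqrt pi / 2)"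
    by (rule gaussian_moment_0)
  hence "set_integrable lborel {0..} (\<lambda>x::real. exp (- x\<^sup>2))"
    unfolding set_integrable_def using has_bochner_integral_iff by blast
  moreover have "(LINT x:{0..}|lborel. exp (- x\<^sup>2)) = sqrt pi / 2"
    unfolding set_lebesgue_integral_def using hb by (rule has_bochner_integral_integral_eq)
  ultimately show ?thesis using set_borel_integral_eq_integral(2) by metis
qed

section \<open>The damped Gamma integral\<close>

definition damped_Gamma :: "real \<Rightarrow> real \<Rightarrow> real" where
  "damped_Gamma a y = integral {0<..} (\<lambda>t. exp (-t - y/t) * t powr (a-1))"

lemma damped_Gamma_integrand_le:
  fixes a y t :: real assumes "0 \<le> y" "0 < t"
  shows "exp (-t - y/t) * t powr (a-1) \<le> t powr (a-1) / exp t"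
proof -
  have "exp (-t - y/t) \<le> exp (-t)" using assms by simp
  hence "exp (-t - y/t) * t powr (a-1) \<le> exp (-t) * t powr (a-1)"
    by (rule mult_right_mono) simp
  thus ?thesis by (simp add: exp_minus field_simps)
qed

lemma damped_Gamma_absolutely_integrable:
  fixes a y :: real assumes "0 \<le> y" and "0 < y \<or> 0 < a"
  shows "(\<lambda>t. exp (-t - y/t) * t powr (a-1)) absolutely_integrable_on {0<..}"
proof -
  \<comment> \<open>for \<open>a \<le> 0\<close> the factor \<open>exp (-y/t) \<le> C t\<^sup>1\<^sup>-\<^sup>a\<close> removes the singularity of \<open>t\<^sup>a\<^sup>-\<^sup>1\<close> at \<open>0\<close>\<close>
  define C where "C = (if 0 < a then 1 else (1-a) powr (1-a) / y powr (1-a))"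
  define b where "b = (if 0 < a then a else 1)"
  have "b > 0" by (simp add: b_def)
  have bound: "exp (-t - y/t) * t powr (a-1) \<le> C * (t powr (b-1) / exp t)" if "0 < t" for t
  proof (cases "0 < a")
    case True
    thus ?thesis using damped_Gamma_integrand_le[OF \<open>0 \<le> y\<close> that] by (simp add: C_def b_def)
  next
    case False
    with assms have "0 < y" "0 < 1 - a" by auto
    have "(y/t) powr (1-a) \<le> (1-a) powr (1-a) * exp (y/t)"
      using powr_le_exp[of "1-a" "y/t"] \<open>0 < 1 - a\<close> \<open>0 < y\<close> that by simp
    hence "exp (- (y/t)) * t powr (a-1) \<le> C"
      using \<open>0 < y\<close> that False
      by (simp add: C_def powr_divide powr_diff exp_minus field_simps)
    have "exp (-t - y/t) * t powr (a-1) = exp (-t) * (exp (- (y/t)) * t powr (a-1))"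
      by (simp add: exp_add[symmetric])
    also have "\<dots> \<le> exp (-t) * C"
      using \<open>exp (- (y/t)) * t powr (a-1) \<le> C\<close> by (rule mult_left_mono) simp
    also have "\<dots> = C * (t powr (b-1) / exp t)"
      using False that by (simp add: b_def exp_minus divide_inverse mult.commute)
    finally show ?thesis .
  qed
  show ?thesis
  proof (rule measurable_bounded_by_integrable_imp_absolutely_integrable)
    show "(\<lambda>t. exp (-t - y/t) * t powr (a-1)) \<in> borel_measurable (lebesgue_on {0<..})"
      by (rule continuous_imp_measurable_on_sets_lebesgue) (auto intro!: continuous_intros)
    show "(\<lambda>t. C * (t powr (b-1) / exp t)) integrable_on {0<..}"
      using Gamma_has_integral_greaterThan[OF \<open>0 < b\<close>] by (intro integrable_on_mult_right) blast
    show "norm (exp (-t - y/t) * t powr (a-1)) \<le> C * (t powr (b-1) / exp t)" if "t \<in> {0<..}" for t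
      using bound that by simp
  qed auto
qed

lemma damped_Gamma_has_integral:
  fixes a y :: real assumes "0 \<le> y" and "0 < y \<or> 0 < a"
  shows "((\<lambda>t. exp (-t - y/t) * t powr (a-1)) has_integral damped_Gamma a y) {0<..}"
  using damped_Gamma_absolutely_integrable[OF assms]
  unfolding damped_Gamma_def absolutely_integrable_on_def by (auto intro: integrable_integral)

lemma damped_Gamma_nonneg:
  fixes a y :: real assumes "0 \<le> y" and "0 < y \<or> 0 < a"
  shows "0 \<le> damped_Gamma a y"
  by (rule has_integral_nonneg[OF damped_Gamma_has_integral[OF assms]]) auto

lemma damped_Gamma_le_Gamma:
  fixes a y :: real assumes "0 < a" "0 \<le> y"
  shows "damped_Gamma a y \<le> Gamma a"
proof (rule has_integral_le)
  show "((\<lambda>t. exp (-t - y/t) * t powr (a-1)) has_integral damped_Gamma a y) {0<..}"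
    using damped_Gamma_has_integral assms by blast
  show "((\<lambda>t. t powr (a-1) / exp t) has_integral Gamma a) {0<..}"
    using Gamma_has_integral_greaterThan assms by blast
qed (use damped_Gamma_integrand_le assms in auto)

lemma damped_Gamma_exp_substitution:
  fixes a x \<sigma> :: real and S :: "real set"
  assumes x: "0 < x" and \<sigma>: "\<bar>\<sigma>\<bar> = 1"
    and S: "(\<lambda>s. x/2 * exp (\<sigma> * s)) ` {0..} = S" "S \<subseteq> {0<..}" "S \<in> sets lebesgue"
  shows "(\<lambda>s. exp (- x * cosh s) * exp (\<sigma> * a * s)) absolutely_integrable_on {0..}
    \<and> integral {0..} (\<lambda>s. exp (- x * cosh s) * exp (\<sigma> * a * s))
        = (x/2) powr (-a) * integral S (\<lambda>t. exp (-t - (x^2/4)/t) * t powr (a-1))"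
proof -
  define g where "g s = x/2 * exp (\<sigma> * s)" for s
  define F where "F t = exp (-t - (x^2/4)/t) * t powr (a-1)" for t
  have g_pos: "0 < g s" for s using x by (simp add: g_def)
  have "\<sigma> = 1 \<or> \<sigma> = -1" using \<sigma> by linarith
  hence "-g s - (x^2/4) / g s = - x * cosh s" for s
    using x by (auto simp: g_def cosh_def exp_minus field_simps power2_eq_square)
  moreover have "\<bar>\<sigma> * g s\<bar> * g s powr (a-1) = (x/2) powr a * exp (\<sigma> * a * s)" for s
  proof -
    have "\<bar>\<sigma> * g s\<bar> * g s powr (a-1) = g s powr a"
      using g_pos[of s] \<sigma> by (simp add: abs_mult powr_diff)
    also have "\<dots> = (x/2) powr a * exp (\<sigma> * s) powr a"
      unfolding g_def using x by (intro powr_mult)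
    also have "\<dots> = (x/2) powr a * exp (\<sigma> * a * s)"
      by (simp add: exp_powr_real mult_ac)
    finally show ?thesis .
  qed
  ultimately have substituted: "\<bar>\<sigma> * g s\<bar> * F (g s) = (x/2) powr a * (exp (- x * cosh s) * exp (\<sigma> * a * s))" for s
    unfolding F_def by (simp add: mult_ac)
  have "F absolutely_integrable_on {0<..}"
    unfolding F_def using damped_Gamma_absolutely_integrable[of "x^2/4" a] x by simp
  have gS: "g ` {0..} = S" using S(1) by (simp add: g_def)
  have "F absolutely_integrable_on g ` {0..}"
    unfolding gS using S \<open>F absolutely_integrable_on {0<..}\<close> by (auto intro: set_integrable_subset)
  moreover have "inj_on g {0..}"
    using x \<sigma> by (auto simp: inj_on_def g_def)
  moreover have "(g has_field_derivative \<sigma> * g s) (at s within {0..})" for s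
    unfolding g_def by (auto intro!: derivative_eq_intros)
  ultimately have "(\<lambda>s. \<bar>\<sigma> * g s\<bar> * F (g s)) absolutely_integrable_on {0..}
      \<and> integral {0..} (\<lambda>s. \<bar>\<sigma> * g s\<bar> * F (g s)) = integral S F"
    unfolding gS[symmetric] by (subst has_absolute_integral_change_of_variables_1') auto
  hence "(\<lambda>s. (x/2) powr (-a) * ((x/2) powr a * (exp (- x * cosh s) * exp (\<sigma> * a * s)))) absolutely_integrable_on {0..}
      \<and> integral {0..} (\<lambda>s. (x/2) powr (-a) * ((x/2) powr a * (exp (- x * cosh s) * exp (\<sigma> * a * s))))
          = (x/2) powr (-a) * integral S F"
    unfolding substituted by (auto intro: set_integrable_mult_right)
  moreover have "(x/2) powr (-a) * ((x/2) powr a * z) = z" for z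
    using x by (simp add: powr_minus field_simps)
  ultimately show ?thesis unfolding F_def by simp
qed

lemma besselK_damped_Gamma:
  fixes a x :: real assumes x: "0 < x"
  shows "(\<lambda>s. exp (- x * cosh s) * cosh (a * s)) absolutely_integrable_on {0..}"
    and "besselK a x = (x/2) powr (-a) / 2 * damped_Gamma a (x^2/4)"
proof -
  define F where "F t = exp (-t - (x^2/4)/t) * t powr (a-1)" for t
  have up: "(\<lambda>s. x/2 * exp (1 * s)) ` {0..} = {x/2..}"
    using image_mult_exp_atLeast_0[of "x/2"] x by simp
  have down: "(\<lambda>s. x/2 * exp (-1 * s)) ` {0..} = {0<..x/2}"
    using image_mult_exp_neg_atLeast_0[of "x/2"] x by simp
  have "{x/2..} \<subseteq> {0<..}" "{0<..x/2} \<subseteq> {0<..}" using x by auto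
  have I_up: "(\<lambda>s. exp (- x * cosh s) * exp (a * s)) absolutely_integrable_on {0..}
      \<and> integral {0..} (\<lambda>s. exp (- x * cosh s) * exp (a * s)) = (x/2) powr (-a) * integral {x/2..} F"
    using damped_Gamma_exp_substitution[OF x _ up, of a] \<open>{x/2..} \<subseteq> {0<..}\<close>
    unfolding F_def by simp
  have I_down: "(\<lambda>s. exp (- x * cosh s) * exp (- (a * s))) absolutely_integrable_on {0..}
      \<and> integral {0..} (\<lambda>s. exp (- x * cosh s) * exp (- (a * s))) = (x/2) powr (-a) * integral {0<..x/2} F"
    using damped_Gamma_exp_substitution[OF x _ down, of a] \<open>{0<..x/2} \<subseteq> {0<..}\<close>
    unfolding F_def by simp
  have cosh_split: "exp (- x * cosh s) * cosh (a * s)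
      = (exp (- x * cosh s) * exp (a * s) + exp (- x * cosh s) * exp (- (a * s))) / 2" for s
    by (simp add: cosh_def exp_minus field_simps)
  show "(\<lambda>s. exp (- x * cosh s) * cosh (a * s)) absolutely_integrable_on {0..}"
    unfolding cosh_split using I_up I_down
    by (intro set_integrable_divide set_integral_add(1)) auto
  have "F absolutely_integrable_on {0<..}"
    unfolding F_def using damped_Gamma_absolutely_integrable[of "x^2/4" a] x by simp
  hence "F absolutely_integrable_on {x/2..}" "F absolutely_integrable_on {0<..x/2}"
    using \<open>{x/2..} \<subseteq> {0<..}\<close> \<open>{0<..x/2} \<subseteq> {0<..}\<close> by (auto intro: set_integrable_subset)
  hence "(F has_integral (integral {x/2..} F + integral {0<..x/2} F)) ({x/2..} \<union> {0<..x/2})"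
    unfolding absolutely_integrable_on_def
    by (intro has_integral_Un integrable_integral) (auto intro: negligible_subset[of "{x/2}"])
  moreover have "{x/2..} \<union> {0<..x/2} = {0<..}" using x by auto
  ultimately have halves: "integral {x/2..} F + integral {0<..x/2} F = damped_Gamma a (x^2/4)"
    unfolding damped_Gamma_def F_def by (simp add: integral_unique)
  have "besselK a x
      = (integral {0..} (\<lambda>s. exp (- x * cosh s) * exp (a * s))
         + integral {0..} (\<lambda>s. exp (- x * cosh s) * exp (- (a * s)))) / 2"
    unfolding besselK_def cosh_split using I_up I_down
    by (subst integral_divide integral_add; auto simp: absolutely_integrable_on_def)+
  also have "\<dots> = (x/2) powr (-a) / 2 * (integral {x/2..} F + integral {0<..x/2} F)"
    using I_up I_down by (simp add: distrib_left)
  finally show "besselK a x = (x/2) powr (-a) / 2 * damped_Gamma a (x^2/4)"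
    unfolding halves .
qed

lemma besselK_minus: "besselK (-a) x = besselK a x"
  by (simp add: besselK_def)

lemma damped_Gamma_symmetric:
  fixes a y :: real assumes y: "0 < y"
  shows "damped_Gamma a y = y powr a * damped_Gamma (-a) y"
proof -
  define x where "x = 2 * sqrt y"
  have x: "0 < x" and xy: "x^2/4 = y" and "x/2 = sqrt y"
    using y by (auto simp: x_def power_mult_distrib)
  have "(x/2) powr (-a) / 2 * damped_Gamma a y = (x/2) powr a / 2 * damped_Gamma (-a) y"
    using besselK_damped_Gamma(2)[OF x, of a] besselK_damped_Gamma(2)[OF x, of "-a"]
    unfolding xy besselK_minus by simp
  hence "damped_Gamma a y = (x/2) powr (2*a) * damped_Gamma (-a) y"
    using x by (simp add: powr_minus field_simps powr_add[symmetric])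
  also have "(x/2) powr (2*a) = y powr a"
    using y unfolding \<open>x/2 = sqrt y\<close> by (simp add: powr_half_sqrt[symmetric] powr_powr)
  finally show ?thesis .
qed

lemma damped_Gamma_integrand_has_integral_in_param:
  fixes a t x :: real assumes "0 < x" "0 < t"
  shows "((\<lambda>s. exp (-t - s/t) * t powr (a-1-1)) has_integral
          (t powr (a-1) / exp t - exp (-t - x/t) * t powr (a-1))) {0<..<x}"
proof -
  define \<Phi> where "\<Phi> s = - t * exp (-t - s/t) * t powr (a-1-1)" for s
  have "((\<lambda>s. exp (-t - s/t) * t powr (a-1-1)) has_integral (\<Phi> x - \<Phi> 0)) {0..x}"
  proof (rule fundamental_theorem_of_calculus)
    show "(\<Phi> has_vector_derivative exp (-t - s/t) * t powr (a-1-1)) (at s within {0..x})" for s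
      unfolding \<Phi>_def has_real_derivative_iff_has_vector_derivative[symmetric]
      using assms by (auto intro!: derivative_eq_intros)
  qed (use assms in auto)
  moreover have "\<Phi> x - \<Phi> 0 = t powr (a-1) / exp t - exp (-t - x/t) * t powr (a-1)"
    using assms by (simp add: \<Phi>_def powr_diff exp_minus exp_diff field_simps power2_eq_square)
  ultimately show ?thesis
    by (simp add: has_integral_greaterThanLessThan_iff)
qed

lemma damped_Gamma_antiderivative_nn_integral:
  fixes a x :: real assumes a: "0 < a" and x: "0 < x"
  shows "(\<lambda>s. damped_Gamma (a-1) s * indicator {0<..<x} s) \<in> borel_measurable borel"
    and "(\<integral>\<^sup>+s. ennreal (damped_Gamma (a-1) s * indicator {0<..<x} s) \<partial>lborel)
           = ennreal (Gamma a - damped_Gamma a x)"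
proof -
  define H where "H s t = ennreal (exp (-t - s/t) * t powr (a-1-1)) * indicator {0<..} t * indicator {0<..<x} s"
    for s t :: real
  have H_meas: "(\<lambda>(s, t). H s t) \<in> borel_measurable (lborel \<Otimes>\<^sub>M lborel)"
    unfolding H_def by measurable
  have H_t: "(\<integral>\<^sup>+t. H s t \<partial>lborel) = ennreal (damped_Gamma (a-1) s * indicator {0<..<x} s)" for s
  proof (cases "s \<in> {0<..<x}")
    case True
    have "(\<integral>\<^sup>+t. H s t \<partial>lborel)
        = (\<integral>\<^sup>+t. ennreal (exp (-t - s/t) * t powr (a-1-1)) * indicator {0<..} t \<partial>lborel)"
      using True unfolding H_def by simp
    also have "\<dots> = ennreal (damped_Gamma (a-1) s)"
      using True by (intro nn_integral_has_integral_lebesgue' damped_Gamma_has_integral) auto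
    finally show ?thesis using True by simp
  qed (simp add: H_def)
  have H_s: "(\<integral>\<^sup>+s. H s t \<partial>lborel)
      = ennreal (t powr (a-1) / exp t - exp (-t - x/t) * t powr (a-1)) * indicator {0<..} t" for t
  proof (cases "0 < t")
    case True
    have "(\<integral>\<^sup>+s. H s t \<partial>lborel)
        = (\<integral>\<^sup>+s. ennreal (exp (-t - s/t) * t powr (a-1-1)) * indicator {0<..<x} s \<partial>lborel)"
      using True unfolding H_def by (intro nn_integral_cong) simp
    also have "\<dots> = ennreal (t powr (a-1) / exp t - exp (-t - x/t) * t powr (a-1))"
      using x True by (intro nn_integral_has_integral_lebesgue' damped_Gamma_integrand_has_integral_in_param) auto
    finally show ?thesis using True by simp
  qed (simp add: H_def)
  have "(\<lambda>s. enn2real (\<integral>\<^sup>+t. H s t \<partial>lborel)) \<in> borel_measurable lborel"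
    using sigma_finite_measure.borel_measurable_nn_integral[OF sigma_finite_lborel H_meas] by measurable
  moreover have "0 \<le> damped_Gamma (a-1) s * indicator {0<..<x} s" for s
    by (cases "s \<in> {0<..<x}") (auto intro: damped_Gamma_nonneg)
  ultimately show "(\<lambda>s. damped_Gamma (a-1) s * indicator {0<..<x} s) \<in> borel_measurable borel"
    unfolding H_t by simp
  have "(\<integral>\<^sup>+s. ennreal (damped_Gamma (a-1) s * indicator {0<..<x} s) \<partial>lborel)
      = (\<integral>\<^sup>+t. ennreal (t powr (a-1) / exp t - exp (-t - x/t) * t powr (a-1)) * indicator {0<..} t \<partial>lborel)"
    using lborel_pair.Fubini'[OF H_meas] by (simp add: H_t H_s)
  also have "\<dots> = ennreal (Gamma a - damped_Gamma a x)"
  proof (rule nn_integral_has_integral_lebesgue')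
    show "((\<lambda>t. t powr (a-1) / exp t - exp (-t - x/t) * t powr (a-1))
        has_integral (Gamma a - damped_Gamma a x)) {0<..}"
      using a x by (intro has_integral_diff Gamma_has_integral_greaterThan damped_Gamma_has_integral) auto
  qed (use x damped_Gamma_integrand_le in force)
  finally show "(\<integral>\<^sup>+s. ennreal (damped_Gamma (a-1) s * indicator {0<..<x} s) \<partial>lborel)
      = ennreal (Gamma a - damped_Gamma a x)" .
qed

lemma damped_Gamma_antiderivative:
  fixes a x :: real assumes a: "0 < a" and x: "0 < x"
  shows "(damped_Gamma (a-1) has_integral (Gamma a - damped_Gamma a x)) {0<..<x}"
proof -
  have "0 \<le> damped_Gamma (a-1) s * indicator {0<..<x} s" for s
    by (cases "s \<in> {0<..<x}") (auto intro: damped_Gamma_nonneg)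
  from nn_integral_has_integral[OF damped_Gamma_antiderivative_nn_integral(1)[OF a x] this
      damped_Gamma_antiderivative_nn_integral(2)[OF a x]]
  have "((\<lambda>s. damped_Gamma (a-1) s * indicator {0<..<x} s) has_integral (Gamma a - damped_Gamma a x)) UNIV"
    using damped_Gamma_le_Gamma a x by simp
  moreover have "(\<lambda>s. damped_Gamma (a-1) s * indicator {0<..<x} s)
      = (\<lambda>s. if s \<in> {0<..<x} then damped_Gamma (a-1) s else 0)"
    by (simp add: fun_eq_iff)
  ultimately have "((\<lambda>s. if s \<in> {0<..<x} then damped_Gamma (a-1) s else 0)
      has_integral (Gamma a - damped_Gamma a x)) UNIV"
    by simp
  thus ?thesis by (rule has_integral_restrict_UNIV[THEN iffD1])
qed

lemma Gamma_minus_damped_Gamma_le: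
  fixes a y :: real assumes a: "0 < a" "a \<le> 2" and y: "0 \<le> y"
  shows "Gamma a - damped_Gamma a y \<le> y powr (a/2) * Gamma (a/2)"
proof (rule has_integral_le)
  show "((\<lambda>t. t powr (a-1) / exp t - exp (-t - y/t) * t powr (a-1)) has_integral (Gamma a - damped_Gamma a y)) {0<..}"
    using a y by (intro has_integral_diff Gamma_has_integral_greaterThan damped_Gamma_has_integral) auto
  show "((\<lambda>t. y powr (a/2) * (t powr (a/2-1) / exp t)) has_integral (y powr (a/2) * Gamma (a/2))) {0<..}"
    using a by (intro has_integral_mult_right Gamma_has_integral_greaterThan) auto
  fix t :: real assume t: "t \<in> {0<..}"
  have "1 - exp (-(y/t)) \<le> (y/t) powr (a/2)"
    using a y t by (intro one_minus_exp_neg_le_powr) auto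
  hence "t powr (a-1) * exp (-t) * (1 - exp (-(y/t))) \<le> t powr (a-1) * exp (-t) * (y/t) powr (a/2)"
    by (intro mult_left_mono) auto
  also have "\<dots> = y powr (a/2) * (t powr (a/2-1) / exp t)"
  proof -
    have "t powr (a-1) = t powr (a/2-1) * t powr (a/2)" by (simp add: powr_add[symmetric])
    thus ?thesis using t y by (simp add: powr_divide exp_minus field_simps)
  qed
  finally show "t powr (a-1) / exp t - exp (-t - y/t) * t powr (a-1) \<le> y powr (a/2) * (t powr (a/2-1) / exp t)"
    by (simp add: exp_diff exp_minus field_simps)
qed

lemma damped_Gamma_tendsto_Gamma:
  fixes a :: real assumes a: "0 < a" "a \<le> 2"
  shows "(damped_Gamma a \<longlongrightarrow> Gamma a) (at_right 0)"
proof (rule tendsto_sandwich)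
  have "((\<lambda>y::real. y powr (a/2)) \<longlongrightarrow> 0) (at_right 0)" using a by real_asymp
  hence "((\<lambda>y. Gamma a - y powr (a/2) * Gamma (a/2)) \<longlongrightarrow> Gamma a - 0 * Gamma (a/2)) (at_right 0)"
    by (intro tendsto_intros)
  thus "((\<lambda>y. Gamma a - y powr (a/2) * Gamma (a/2)) \<longlongrightarrow> Gamma a) (at_right 0)" by simp
  show "\<forall>\<^sub>F y in at_right 0. Gamma a - y powr (a/2) * Gamma (a/2) \<le> damped_Gamma a y"
    using eventually_at_right_less[of 0]
  proof eventually_elim
    case (elim y)
    thus ?case using Gamma_minus_damped_Gamma_le[OF a, of y] by simp
  qed
  show "\<forall>\<^sub>F y in at_right 0. damped_Gamma a y \<le> Gamma a"
    using eventually_at_right_less[of 0]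
  proof eventually_elim
    case (elim y)
    thus ?case using damped_Gamma_le_Gamma[OF a(1), of y] by simp
  qed
qed (rule tendsto_const)

section \<open>Expansion at the origin\<close>

lemma damped_Gamma_neg_first_order:
  fixes b :: real assumes b: "0 < b" "b \<le> 2"
  shows "(\<lambda>s. damped_Gamma (-b) s - Gamma b * s powr (-b)) \<in> o[at_right 0](\<lambda>s. s powr (-b))"
proof -
  have "(\<lambda>s. damped_Gamma b s - Gamma b) \<in> o[at_right 0](\<lambda>_. 1)"
  proof (rule smalloI_tendsto)
    have "((\<lambda>s. damped_Gamma b s - Gamma b) \<longlongrightarrow> Gamma b - Gamma b) (at_right 0)"
      using b by (intro tendsto_diff damped_Gamma_tendsto_Gamma tendsto_const) auto
    thus "((\<lambda>s. (damped_Gamma b s - Gamma b) / 1) \<longlongrightarrow> 0) (at_right 0)" by simp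
  qed simp
  hence "(\<lambda>s. s powr (-b) * (damped_Gamma b s - Gamma b)) \<in> o[at_right 0](\<lambda>s. s powr (-b) * 1)"
    by (rule landau_o.small.mult_left)
  moreover have "\<forall>\<^sub>F s in at_right 0. s powr (-b) * (damped_Gamma b s - Gamma b)
      = damped_Gamma (-b) s - Gamma b * s powr (-b)"
    using eventually_at_right_less[of 0]
  proof eventually_elim
    case (elim s)
    thus ?case using damped_Gamma_symmetric[of s "-b"] by (simp add: algebra_simps)
  qed
  ultimately show ?thesis
    by (simp add: landau_o.small.in_cong[THEN iffD1, rotated])
qed

lemma Gamma_minus_damped_Gamma_first_order:
  fixes a :: real assumes a: "0 < a" "a < 1"
  shows "(\<lambda>y. Gamma a - damped_Gamma a y - Gamma (1-a) / a * y powr a) \<in> o[at_right 0](\<lambda>y. y powr a)"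
proof -
  have small: "(\<lambda>s. damped_Gamma (a-1) s - Gamma (1-a) * s powr (a-1)) \<in> o[at_right 0](\<lambda>s. s powr (a-1))"
    using damped_Gamma_neg_first_order[of "1-a"] a by simp
  have "(\<lambda>x. Gamma a - damped_Gamma a x - Gamma (1-a) * (x powr a / a)) \<in> o[at_right 0](\<lambda>x. x powr a / a)"
  proof (rule has_integral_smallo[OF zero_less_one _ _ _ small])
    fix x :: real assume x: "0 < x" "x < 1"
    show "((\<lambda>s. s powr (a-1)) has_integral x powr a / a) {0<..<x}"
      using has_integral_powr_from_0[of "a-1" x] a x
      by (simp add: has_integral_greaterThanLessThan_iff)
    thus "((\<lambda>s. damped_Gamma (a-1) s - Gamma (1-a) * s powr (a-1))
        has_integral Gamma a - damped_Gamma a x - Gamma (1-a) * (x powr a / a)) {0<..<x}"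
      using damped_Gamma_antiderivative[of a x] a x
      by (intro has_integral_diff has_integral_mult_right) simp_all
  qed simp
  thus ?thesis using a by simp
qed

lemma damped_Gamma_neg_second_order:
  fixes b :: real assumes b: "0 < b" "b < 1"
  shows "(\<lambda>s. damped_Gamma (-b) s - (Gamma b * s powr (-b) - Gamma (1-b) / b)) \<in> o[at_right 0](\<lambda>_. 1)"
proof -
  have "(\<lambda>s. s powr (-b) * (Gamma b - damped_Gamma b s - Gamma (1-b) / b * s powr b))
      \<in> o[at_right 0](\<lambda>s. s powr (-b) * s powr b)"
    using Gamma_minus_damped_Gamma_first_order[OF b] by (rule landau_o.small.mult_left)
  also have "(\<lambda>s. s powr (-b) * s powr b) \<in> \<Theta>[at_right 0](\<lambda>_. 1)"
    by (intro bigthetaI_cong eventually_mono[OF eventually_at_right_less[of 0]])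
       (simp add: powr_add[symmetric])
  finally have "(\<lambda>s. s powr (-b) * (Gamma b - damped_Gamma b s - Gamma (1-b) / b * s powr b))
      \<in> o[at_right 0](\<lambda>_. 1)" .
  moreover have "\<forall>\<^sub>F s in at_right 0.
      s powr (-b) * (Gamma b - damped_Gamma b s - Gamma (1-b) / b * s powr b)
      = - (damped_Gamma (-b) s - (Gamma b * s powr (-b) - Gamma (1-b) / b))"
    using eventually_at_right_less[of 0]
  proof eventually_elim
    case (elim s)
    have "s powr (-b) * s powr b = 1" using elim by (simp add: powr_add[symmetric])
    thus ?case using damped_Gamma_symmetric[of s "-b"] elim by (simp add: algebra_simps)
  qed
  ultimately have "(\<lambda>s. - (damped_Gamma (-b) s - (Gamma b * s powr (-b) - Gamma (1-b) / b)))
      \<in> o[at_right 0](\<lambda>_. 1)"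
    by (rule landau_o.small.in_cong[THEN iffD1, rotated])
  thus ?thesis by (simp only: landau_o.small.uminus_in_iff)
qed

lemma Gamma_minus_damped_Gamma_second_order:
  fixes a :: real assumes a: "0 < a" "a < 1"
  shows "(\<lambda>y. Gamma a - damped_Gamma a y - (Gamma (1-a) * y powr a / a - Gamma a / (1-a) * y))
           \<in> o[at_right 0](\<lambda>y. y)"
proof -
  have small: "(\<lambda>s. damped_Gamma (a-1) s - (Gamma (1-a) * s powr (a-1) - Gamma a / (1-a)))
      \<in> o[at_right 0](\<lambda>_. 1)"
    using damped_Gamma_neg_second_order[of "1-a"] a by simp
  have "(\<lambda>x. Gamma a - damped_Gamma a x - (Gamma (1-a) * (x powr a / a) - Gamma a / (1-a) * x))
      \<in> o[at_right 0](\<lambda>x. x)"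
  proof (rule has_integral_smallo[OF zero_less_one _ _ _ small])
    fix x :: real assume x: "0 < x" "x < 1"
    have "((\<lambda>s. Gamma (1-a) * s powr (a-1)) has_integral Gamma (1-a) * (x powr a / a)) {0<..<x}"
      using has_integral_powr_from_0[of "a-1" x] a x
      by (intro has_integral_mult_right) (simp add: has_integral_greaterThanLessThan_iff)
    moreover have "((\<lambda>s. Gamma a / (1-a)) has_integral Gamma a / (1-a) * x) {0<..<x}"
      using has_integral_const_real[of "Gamma a / (1-a)" 0 x] x
      by (simp add: has_integral_greaterThanLessThan_iff real_scaleR_def mult.commute)
    ultimately show "((\<lambda>s. damped_Gamma (a-1) s - (Gamma (1-a) * s powr (a-1) - Gamma a / (1-a)))
        has_integral Gamma a - damped_Gamma a x - (Gamma (1-a) * (x powr a / a) - Gamma a / (1-a) * x))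
        {0<..<x}"
      using damped_Gamma_antiderivative[of a x] a x by (intro has_integral_diff) simp_all
  next
    show "((\<lambda>s. 1) has_integral x) {0<..<x}" if "0 < x" "x < 1" for x :: real
      using has_integral_const_real[of "1::real" 0 x] that
      by (simp add: has_integral_greaterThanLessThan_iff real_scaleR_def)
  qed simp
  thus ?thesis by simp
qed

section \<open>Asymptotics of the Bessel function at infinity\<close>

text \<open>\<open>exp x\<close> times the integrand of \<open>besselK a x\<close> at \<open>s = sqrt (2/x) * v\<close>.\<close>
definition besselK_rescaled :: "real \<Rightarrow> real \<Rightarrow> real \<Rightarrow> real" where
  "besselK_rescaled a x v = exp (- x * (cosh (sqrt (2/x) * v) - 1)) * cosh (a * (sqrt (2/x) * v))"

lemma besselK_rescaled_bound:
  fixes a x v :: real assumes x: "1 \<le> x" and v: "0 \<le> v"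
  shows "\<bar>besselK_rescaled a x v\<bar> \<le> exp ((\<bar>a\<bar> * sqrt 2 + 1)^2 / 4) * exp (- v)"
proof -
  define c where "c = sqrt (2/x)"
  have "2/x \<le> 2" using x by (auto simp: field_simps)
  hence c: "0 < c" "c^2 = 2/x" "c \<le> sqrt 2" using x by (auto simp: c_def)
  have "x * (c * v)^2 / 2 = v^2" using c x by (simp add: power_mult_distrib)
  moreover have "x * (c * v)^2 / 2 \<le> x * (cosh (c * v) - 1)"
    using one_plus_square_half_le_cosh[of "c * v"] x by (simp add: mult_left_mono)
  ultimately have "exp (- x * (cosh (c * v) - 1)) \<le> exp (- (v^2))" by simp
  moreover have "cosh (a * (c * v)) \<le> exp (\<bar>a\<bar> * sqrt 2 * v)"
  proof -
    have "\<bar>a * (c * v)\<bar> \<le> \<bar>a\<bar> * sqrt 2 * v"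
      using c v by (simp add: abs_mult mult.assoc mult_left_mono mult_right_mono)
    thus ?thesis using cosh_le_exp_abs[of "a * (c * v)"] by (meson exp_le_cancel_iff order_trans)
  qed
  ultimately have "besselK_rescaled a x v \<le> exp (- (v^2)) * exp (\<bar>a\<bar> * sqrt 2 * v)"
    unfolding besselK_rescaled_def c_def[symmetric] by (intro mult_mono) auto
  also have "\<dots> \<le> exp ((\<bar>a\<bar> * sqrt 2 + 1)^2 / 4) * exp (- v)"
  proof -
    define B where "B = \<bar>a\<bar> * sqrt 2 + 1"
    have "B^2/4 + - v - (- (v^2) + \<bar>a\<bar> * sqrt 2 * v) = (v - B/2)^2"
      by (simp add: B_def power2_eq_square algebra_simps)
    hence "- (v^2) + \<bar>a\<bar> * sqrt 2 * v \<le> B^2/4 + - v"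
      using zero_le_power2[of "v - B/2"] by linarith
    thus ?thesis unfolding B_def by (simp add: exp_add[symmetric])
  qed
  finally show ?thesis by (simp add: besselK_rescaled_def)
qed

lemma besselK_rescaled_tendsto:
  fixes a v :: real assumes "0 \<le> v"
  shows "((\<lambda>x. besselK_rescaled a x v) \<longlongrightarrow> exp (- (v^2))) at_top"
proof (cases "v = 0")
  case True thus ?thesis by (simp add: besselK_rescaled_def)
next
  case False
  with assms have "0 < v" by simp
  have "((\<lambda>x. x * (cosh (sqrt 2 / sqrt x * v) - 1)) \<longlongrightarrow> v * (v * (root 2 2 * root 2 2)) / 2) at_top"
    using \<open>0 < v\<close> unfolding cosh_field_def by real_asymp
  moreover have "v * (v * (root 2 2 * root 2 2)) / 2 = v^2"
    by (simp add: sqrt_def[symmetric] power2_eq_square)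
  ultimately have "((\<lambda>x. x * (cosh (sqrt (2/x) * v) - 1)) \<longlongrightarrow> v^2) at_top"
    by (simp add: real_sqrt_divide)
  moreover have "((\<lambda>x::real. sqrt (2/x)) \<longlongrightarrow> 0) at_top" by real_asymp
  ultimately have "((\<lambda>x. exp (- (x * (cosh (sqrt (2/x) * v) - 1))) * cosh (a * (sqrt (2/x) * v)))
      \<longlongrightarrow> exp (- (v^2)) * cosh (a * (0 * v))) at_top"
    by (intro tendsto_intros)
  thus ?thesis by (simp add: besselK_rescaled_def)
qed

lemma besselK_rescaled_integral:
  fixes a x :: real assumes x: "0 < x"
  shows "besselK_rescaled a x integrable_on {0..}"
    and "sqrt x * exp x * besselK a x = sqrt 2 * integral {0..} (besselK_rescaled a x)"
proof -
  define h where "h s = exp x * (exp (- x * cosh s) * cosh (a * s))" for s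
  define c where "c = sqrt (2/x)"
  have c: "0 < c" and "sqrt x * c = sqrt 2" using x by (simp_all add: c_def real_sqrt_divide)
  have h_c: "h (c * v) = besselK_rescaled a x v" for v
    unfolding h_def besselK_rescaled_def c_def by (simp add: exp_add[symmetric] algebra_simps)
  have "h absolutely_integrable_on {0..}"
    unfolding h_def using besselK_damped_Gamma(1)[OF x] by (intro set_integrable_mult_right)
  moreover have "(\<lambda>v. c * v) ` {0..} = {0..}"
  proof
    show "{0..} \<subseteq> (\<lambda>v. c * v) ` {0..}"
    proof
      fix t :: real assume "t \<in> {0..}"
      hence "t = c * (t / c)" "t / c \<in> {0..}" using c by auto
      thus "t \<in> (\<lambda>v. c * v) ` {0..}" by blast
    qed
  qed (use c in auto)
  moreover have "((\<lambda>v. c * v) has_field_derivative c) (at v within {0..})" for v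
    by (auto intro!: derivative_eq_intros)
  moreover have "inj_on (\<lambda>v. c * v) {0..}" using c by (auto simp: inj_on_def)
  ultimately have "(\<lambda>v. \<bar>c\<bar> * h (c * v)) absolutely_integrable_on {0..}
      \<and> integral {0..} (\<lambda>v. \<bar>c\<bar> * h (c * v)) = integral {0..} h"
    by (subst has_absolute_integral_change_of_variables_1') auto
  moreover have "integral {0..} h = exp x * besselK a x"
    unfolding h_def besselK_def by simp
  ultimately have cv: "(\<lambda>v. c * besselK_rescaled a x v) integrable_on {0..}"
      "c * integral {0..} (besselK_rescaled a x) = exp x * besselK a x"
    using c unfolding h_c by (auto simp: absolutely_integrable_on_def)
  thus "besselK_rescaled a x integrable_on {0..}" using c by simp
  have "sqrt x * exp x * besselK a x = sqrt x * c * integral {0..} (besselK_rescaled a x)"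
    by (simp add: cv(2))
  thus "sqrt x * exp x * besselK a x = sqrt 2 * integral {0..} (besselK_rescaled a x)"
    unfolding \<open>sqrt x * c = sqrt 2\<close> .
qed

lemma tendsto_integral_besselK_rescaled:
  "((\<lambda>x. integral {0..} (besselK_rescaled a x)) \<longlongrightarrow> sqrt pi / 2) at_top"
proof (rule tendsto_at_topI_sequentially)
  fix X :: "nat \<Rightarrow> real" assume X: "filterlim X at_top sequentially"
  define Y where "Y n = max 1 (X n)" for n
  have Y: "filterlim Y at_top sequentially"
    by (rule filterlim_at_top_mono[OF X]) (auto simp: Y_def)
  have Y1: "1 \<le> Y n" for n by (simp add: Y_def)
  define C where "C = exp ((\<bar>a\<bar> * sqrt 2 + 1)^2 / 4)"
  have "(\<lambda>n. integral {0..} (besselK_rescaled a (Y n))) \<longlonglongrightarrow> integral {0..} (\<lambda>v. exp (- (v^2)))"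
  proof (rule dominated_convergence(2)[where h = "\<lambda>v. C * exp (- 1 * v)"])
    show "besselK_rescaled a (Y n) integrable_on {0..}" for n
      using besselK_rescaled_integral(1)[of "Y n" a] Y1[of n] by simp
    have "(\<lambda>v::real. exp (- 1 * v)) integrable_on {0..}"
      by (rule integrable_on_exp_minus_to_infinity) simp
    thus "(\<lambda>v. C * exp (- 1 * v)) integrable_on {0..}" by (rule integrable_on_mult_right)
    show "norm (besselK_rescaled a (Y n) v) \<le> C * exp (- 1 * v)" if "v \<in> {0..}" for n v
      using besselK_rescaled_bound[OF Y1[of n], of v a] that by (simp add: C_def)
    show "(\<lambda>n. besselK_rescaled a (Y n) v) \<longlonglongrightarrow> exp (- (v^2))" if "v \<in> {0..}" for v
      using filterlim_compose[OF besselK_rescaled_tendsto Y] that by simp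
  qed
  moreover have "\<forall>\<^sub>F n in sequentially. 1 \<le> X n"
    using X by (simp add: filterlim_at_top)
  hence "\<forall>\<^sub>F n in sequentially.
      integral {0..} (besselK_rescaled a (Y n)) = integral {0..} (besselK_rescaled a (X n))"
    by eventually_elim (simp add: Y_def)
  ultimately show "(\<lambda>n. integral {0..} (besselK_rescaled a (X n))) \<longlonglongrightarrow> sqrt pi / 2"
    unfolding integral_exp_neg_square_atLeast_0 by (rule Lim_transform_eventually)
qed

lemma besselK_asymptotic:
  "((\<lambda>x. sqrt x * exp x * besselK a x) \<longlongrightarrow> sqrt pi / sqrt 2) at_top"
proof -
  have "((\<lambda>x. sqrt 2 * integral {0..} (besselK_rescaled a x)) \<longlongrightarrow> sqrt 2 * (sqrt pi / 2)) at_top"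
    by (intro tendsto_intros tendsto_integral_besselK_rescaled)
  moreover have "sqrt 2 * (sqrt pi / 2) = sqrt pi / sqrt 2"
    by (simp add: field_simps)
  moreover have "\<forall>\<^sub>F x in at_top. sqrt 2 * integral {0..} (besselK_rescaled a x) = sqrt x * exp x * besselK a x"
    using eventually_gt_at_top[of 0] by eventually_elim (simp add: besselK_rescaled_integral(2))
  ultimately show ?thesis by (simp add: Lim_transform_eventually)
qed

section \<open>The spectral density\<close>

lemma c1_Gamma_eq_c2:
  fixes k :: real assumes k: "0 < k" "k < 1"
  shows "c1 k * 2 powr ((1-k)/2 - 1) * Gamma ((1-k)/2) = c2 k"
proof -
  define m where "m = (1-k)/2"
  have m: "0 < m" "m < 1" "1 - m = k/2 + 1/2" using k by (auto simp: m_def field_simps)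
  have "0 < k * pi / 2" "k * pi / 2 < pi / 2" using k by auto
  hence "0 < cos (k * pi / 2)" using pi_gt_zero by (intro cos_gt_zero_pi) linarith+
  have Gamma_pos: "0 < Gamma (k/2)" "0 < Gamma k" "0 < Gamma (1-m)" using k m by auto
  have refl: "Gamma m * Gamma (1-m) = pi / cos (k * pi / 2)"
  proof -
    have "sin (pi * m) = cos (k * pi / 2)" unfolding m_def
      by (simp add: sin_cos_eq algebra_simps diff_divide_distrib)
    thus ?thesis using Gamma_reflection_real[OF m(1,2)] by simp
  qed
  have dup: "Gamma (k/2) * Gamma (1-m) = 2 powr (1-k) * sqrt pi * Gamma k"
    using Gamma_legendre_duplication_real[of "k/2"] k m(3) by simp
  have "c1 k * 2 powr (m - 1) * Gamma m
      = 2 powr (-k) * (Gamma m * Gamma (1-m)) / (sqrt pi * (Gamma (k/2) * Gamma (1-m)))"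
    using Gamma_pos
    by (simp add: c1_def m_def powr_add[symmetric] powr_diff field_simps)
  also have "\<dots> = 2 powr (-k) * (pi / cos (k * pi / 2)) / (sqrt pi * sqrt pi * (2 powr (1-k) * Gamma k))"
    unfolding refl dup by (simp only: mult_ac)
  also have "\<dots> = 2 powr (-k) / (2 powr (1-k) * cos (k * pi / 2) * Gamma k)"
    using \<open>0 < cos (k * pi / 2)\<close> by simp
  also have "\<dots> = c2 k"
    by (simp add: c2_def powr_diff powr_minus field_simps)
  finally show ?thesis by (simp add: m_def)
qed

definition theta :: "real \<Rightarrow> real \<Rightarrow> real" where
  "theta \<kappa> u = 1 - damped_Gamma ((1-\<kappa>)/2) (u^2/4) / Gamma ((1-\<kappa>)/2)"

lemma theta_bounds:
  fixes \<kappa> u :: real assumes "0 < \<kappa>" "\<kappa> < 1"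
  shows "0 \<le> theta \<kappa> u" and "theta \<kappa> u \<le> 1"
proof -
  define m where "m = (1-\<kappa>)/2"
  have "0 < m" using assms by (simp add: m_def)
  hence "0 \<le> damped_Gamma m (u^2/4)" "damped_Gamma m (u^2/4) \<le> Gamma m" "0 < Gamma m"
    by (auto intro: damped_Gamma_nonneg damped_Gamma_le_Gamma)
  thus "0 \<le> theta \<kappa> u" "theta \<kappa> u \<le> 1"
    unfolding theta_def m_def[symmetric] by (simp_all add: field_simps)
qed

lemma besselK_term_eq_theta:
  fixes \<kappa> u :: real assumes \<kappa>: "0 < \<kappa>" "\<kappa> < 1" and u: "0 < u"
  shows "c1 \<kappa> * (besselK ((\<kappa>-1)/2) u * u powr ((\<kappa>-1)/2)) = c2 \<kappa> * ((1 - theta \<kappa> u) / u powr (1-\<kappa>))"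
proof -
  define m where "m = (1-\<kappa>)/2"
  have "0 < Gamma m" using \<kappa> by (simp add: m_def)
  have "(\<kappa>-1)/2 = -m" by (simp add: m_def field_simps)
  hence "besselK ((\<kappa>-1)/2) u * u powr ((\<kappa>-1)/2) = (u/2) powr (-m) * u powr (-m) / 2 * damped_Gamma m (u^2/4)"
    using besselK_damped_Gamma(2)[OF u, of m] by (simp add: besselK_minus)
  also have "(u/2) powr (-m) * u powr (-m) = 2 powr m / (u powr m * u powr m)"
    using u by (simp add: powr_divide powr_minus field_simps)
  also have "u powr m * u powr m = u powr (1-\<kappa>)"
    by (simp add: m_def powr_add[symmetric])
  finally have "c1 \<kappa> * (besselK ((\<kappa>-1)/2) u * u powr ((\<kappa>-1)/2))
      = c1 \<kappa> * 2 powr (m-1) * Gamma m * (damped_Gamma m (u^2/4) / Gamma m) / u powr (1-\<kappa>)"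
    using \<open>0 < Gamma m\<close> by (simp add: powr_diff field_simps)
  also have "\<dots> = c2 \<kappa> * ((1 - theta \<kappa> u) / u powr (1-\<kappa>))"
    using c1_Gamma_eq_c2[OF \<kappa>] by (simp add: theta_def m_def)
  finally show ?thesis .
qed

lemma f_dens_eq_theta:
  fixes \<kappa> w lam :: real assumes "0 < \<kappa>" "\<kappa> < 1" and "lam \<noteq> w" "lam \<noteq> -w"
  shows "f_dens \<kappa> w lam = c2 \<kappa> / 2 *
           ((1 - theta \<kappa> \<bar>lam + w\<bar>) / \<bar>lam + w\<bar> powr (1 - \<kappa>)
          + (1 - theta \<kappa> \<bar>lam - w\<bar>) / \<bar>lam - w\<bar> powr (1 - \<kappa>))"
proof -
  have "0 < \<bar>lam + w\<bar>" "0 < \<bar>lam - w\<bar>" using assms by auto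
  have "f_dens \<kappa> w lam
      = (c1 \<kappa> * (besselK ((\<kappa>-1)/2) \<bar>lam + w\<bar> * \<bar>lam + w\<bar> powr ((\<kappa>-1)/2))
       + c1 \<kappa> * (besselK ((\<kappa>-1)/2) \<bar>lam - w\<bar> * \<bar>lam - w\<bar> powr ((\<kappa>-1)/2))) / 2"
    unfolding f_dens_def by (simp add: algebra_simps)
  also have "\<dots> = c2 \<kappa> / 2 *
           ((1 - theta \<kappa> \<bar>lam + w\<bar>) / \<bar>lam + w\<bar> powr (1 - \<kappa>)
          + (1 - theta \<kappa> \<bar>lam - w\<bar>) / \<bar>lam - w\<bar> powr (1 - \<kappa>))"
    unfolding besselK_term_eq_theta[OF assms(1,2) \<open>0 < \<bar>lam + w\<bar>\<close>]
      besselK_term_eq_theta[OF assms(1,2) \<open>0 < \<bar>lam - w\<bar>\<close>]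
    by (simp add: algebra_simps)
  finally show ?thesis .
qed

lemma theta_minus_expansion_eq:
  fixes \<kappa> u :: real assumes \<kappa>: "0 < \<kappa>" "\<kappa> < 1" and u: "0 < u"
  defines "m \<equiv> (1-\<kappa>)/2" and "y \<equiv> u^2/4"
  shows "theta \<kappa> u - (Gamma ((\<kappa> + 1) / 2) / (2 powr (1 - \<kappa>) * Gamma ((3 - \<kappa>) / 2))
                  * \<bar>u\<bar> powr (1 - \<kappa>) - 1 / (2 * (\<kappa> + 1)) * \<bar>u\<bar>^2)
         = (Gamma m - damped_Gamma m y - (Gamma (1-m) * y powr m / m - Gamma m / (1-m) * y)) / Gamma m"
proof -
  have m: "0 < m" "m < 1" using \<kappa> by (auto simp: m_def)
  have "Gamma m \<noteq> 0" using Gamma_real_pos[OF m(1)] by linarith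
  have "m \<notin> \<int>\<^sub>\<le>\<^sub>0" using m by (auto elim!: nonpos_Ints_cases)
  hence "Gamma (m + 1) = m * Gamma m" by (rule Gamma_plus1)
  moreover have "(3 - \<kappa>) / 2 = m + 1" by (simp add: m_def field_simps)
  ultimately have Gamma_3: "Gamma ((3 - \<kappa>) / 2) = m * Gamma m" by (simp only:)
  have Gamma_1: "Gamma ((\<kappa> + 1) / 2) = Gamma (1-m)" by (simp add: m_def field_simps)
  have "y = (u/2) powr 2" using u by (simp add: y_def power_divide powr_numeral)
  hence "y powr m = (u/2) powr (2*m)" by (simp only: powr_powr)
  moreover have "2*m = 1-\<kappa>" by (simp add: m_def)
  ultimately have u_pow: "\<bar>u\<bar> powr (1-\<kappa>) = 2 powr (1-\<kappa>) * y powr m"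
    using u by (simp add: powr_divide)
  have u_sq: "\<bar>u\<bar>^2 = 4 * y" by (simp add: y_def)
  have \<kappa>_eq: "\<kappa> = 1 - 2*m" by (simp add: m_def field_simps)
  have "theta \<kappa> u - (Gamma ((\<kappa> + 1) / 2) / (2 powr (1 - \<kappa>) * Gamma ((3 - \<kappa>) / 2))
                  * \<bar>u\<bar> powr (1 - \<kappa>) - 1 / (2 * (\<kappa> + 1)) * \<bar>u\<bar>^2)
      = 1 - damped_Gamma m y / Gamma m - (Gamma (1-m) / (m * Gamma m) * y powr m - y / (1-m))"
    unfolding theta_def m_def[symmetric] y_def[symmetric] Gamma_1 Gamma_3 u_pow u_sq
    using m by (simp add: \<kappa>_eq field_simps)
  also have "\<dots> = (Gamma m - damped_Gamma m y - (Gamma (1-m) * y powr m / m - Gamma m / (1-m) * y)) / Gamma m"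
    using m \<open>Gamma m \<noteq> 0\<close> by (simp add: field_simps)
  finally show ?thesis .
qed

lemma theta_expansion:
  fixes \<kappa> :: real assumes \<kappa>: "0 < \<kappa>" "\<kappa> < 1"
  shows "(\<lambda>u. theta \<kappa> u - (Gamma ((\<kappa> + 1) / 2) / (2 powr (1 - \<kappa>) * Gamma ((3 - \<kappa>) / 2))
                  * \<bar>u\<bar> powr (1 - \<kappa>) - 1 / (2 * (\<kappa> + 1)) * \<bar>u\<bar>^2))
         \<in> o[at_right 0](\<lambda>u. \<bar>u\<bar>^2)"
proof -
  define m where "m = (1-\<kappa>)/2"
  have m: "0 < m" "m < 1" using \<kappa> by (auto simp: m_def)
  have "Gamma m \<noteq> 0" using Gamma_real_pos[OF m(1)] by linarith
  define R where "R y = Gamma m - damped_Gamma m y - (Gamma (1-m) * y powr m / m - Gamma m / (1-m) * y)" for y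
  have "filterlim (\<lambda>u::real. u^2/4) (at_right 0) (at_right 0)" by real_asymp
  from landau_o.small.compose[OF Gamma_minus_damped_Gamma_second_order[OF m, folded R_def] this]
  have "(\<lambda>u. R (u^2/4) / Gamma m) \<in> o[at_right 0](\<lambda>u. u^2)"
    using \<open>Gamma m \<noteq> 0\<close> by simp
  moreover have "\<forall>\<^sub>F u in at_right 0. R (u^2/4) / Gamma m
      = theta \<kappa> u - (Gamma ((\<kappa> + 1) / 2) / (2 powr (1 - \<kappa>) * Gamma ((3 - \<kappa>) / 2))
                  * \<bar>u\<bar> powr (1 - \<kappa>) - 1 / (2 * (\<kappa> + 1)) * \<bar>u\<bar>^2)"
    using eventually_at_right_less[of 0]
  proof eventually_elim
    case (elim u)
    show ?case unfolding R_def m_def by (rule theta_minus_expansion_eq[OF \<kappa> elim, symmetric])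
  qed
  ultimately show ?thesis by (simp add: landau_o.small.in_cong[THEN iffD1, rotated])
qed

lemma f_dens_0_asymp_equiv:
  fixes \<kappa> :: real assumes \<kappa>: "0 < \<kappa>" "\<kappa> < 1"
  shows "(\<lambda>lam. f_dens \<kappa> 0 lam)
           \<sim>[at_infinity] (\<lambda>lam. c1 \<kappa> * sqrt pi / sqrt 2 * \<bar>lam\<bar> powr ((\<kappa> - 2) / 2) * exp (- \<bar>lam\<bar>))"
proof -
  have "0 < c1 \<kappa>" using \<kappa> by (simp add: c1_def)
  have asymp: "(\<lambda>x. c1 \<kappa> * (besselK ((\<kappa>-1)/2) x * x powr ((\<kappa>-1)/2)))
      \<sim>[at_top] (\<lambda>x. c1 \<kappa> * sqrt pi / sqrt 2 * x powr ((\<kappa> - 2) / 2) * exp (- x))"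
  proof (rule asymp_equivI')
    have "((\<lambda>x. sqrt x * exp x * besselK ((\<kappa>-1)/2) x / (sqrt pi / sqrt 2))
        \<longlongrightarrow> (sqrt pi / sqrt 2) / (sqrt pi / sqrt 2)) at_top"
      by (intro tendsto_intros besselK_asymptotic) simp
    moreover have "\<forall>\<^sub>F x in at_top. sqrt x * exp x * besselK ((\<kappa>-1)/2) x / (sqrt pi / sqrt 2)
        = c1 \<kappa> * (besselK ((\<kappa>-1)/2) x * x powr ((\<kappa>-1)/2))
          / (c1 \<kappa> * sqrt pi / sqrt 2 * x powr ((\<kappa> - 2) / 2) * exp (- x))"
      using eventually_gt_at_top[of 0]
    proof eventually_elim
      case (elim x)
      have "x powr ((\<kappa>-1)/2) = sqrt x * x powr ((\<kappa>-2)/2)"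
        using elim by (simp add: powr_half_sqrt[symmetric] powr_add[symmetric] add_divide_distrib[symmetric])
      thus ?case using elim \<open>0 < c1 \<kappa>\<close> by (simp add: exp_minus field_simps)
    qed
    ultimately show "((\<lambda>x. c1 \<kappa> * (besselK ((\<kappa>-1)/2) x * x powr ((\<kappa>-1)/2))
        / (c1 \<kappa> * sqrt pi / sqrt 2 * x powr ((\<kappa> - 2) / 2) * exp (- x))) \<longlongrightarrow> 1) at_top"
      by (simp add: Lim_transform_eventually)
  qed
  have "filterlim (\<lambda>lam::real. norm lam) at_top at_infinity"
    by (rule filterlim_at_infinity_imp_norm_at_top[OF filterlim_ident])
  hence "filterlim (\<lambda>lam::real. \<bar>lam\<bar>) at_top at_infinity" by simp
  moreover have "f_dens \<kappa> 0 lam = c1 \<kappa> * (besselK ((\<kappa>-1)/2) \<bar>lam\<bar> * \<bar>lam\<bar> powr ((\<kappa>-1)/2))" for lam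
    by (simp add: f_dens_def)
  ultimately show ?thesis
    using asymp_equiv_compose'[OF asymp] by simp
qed

theorem lemma1:
  fixes kappa :: real
  assumes "0 < kappa" and "kappa < 1"
  shows "(\<exists>\<theta> :: real \<Rightarrow> real.
           (\<forall>w lam. lam \<noteq> w \<and> lam \<noteq> - w \<longrightarrow>
              f_dens kappa w lam = c2 kappa / 2 *
                ((1 - \<theta> \<bar>lam + w\<bar>) / \<bar>lam + w\<bar> powr (1 - kappa)
               + (1 - \<theta> \<bar>lam - w\<bar>) / \<bar>lam - w\<bar> powr (1 - kappa)))
         \<and> bounded (\<theta> ` {0..})
         \<and> (\<forall>u\<ge>0. \<theta> u \<le> 1)
         \<and> (\<lambda>u. \<theta> u - (Gamma ((kappa + 1) / 2) / (2 powr (1 - kappa) * Gamma ((3 - kappa) / 2))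
                         * \<bar>u\<bar> powr (1 - kappa) - 1 / (2 * (kappa + 1)) * \<bar>u\<bar>^2))
             \<in> o[at_right 0](\<lambda>u. \<bar>u\<bar>^2))
       \<and> ((\<lambda>lam. f_dens kappa 0 lam) \<sim>[at_infinity]
           (\<lambda>lam. c1 kappa * sqrt pi / sqrt 2 * \<bar>lam\<bar> powr ((kappa - 2) / 2) * exp (- \<bar>lam\<bar>)))"
proof -
  have "bounded (theta kappa ` {0..})"
    unfolding bounded_iff using theta_bounds[OF assms] by (intro exI[of _ 1]) auto
  with assms show ?thesis
    using f_dens_eq_theta theta_bounds(2) theta_expansion f_dens_0_asymp_equiv
    by (intro conjI exI[of _ "theta kappa"]) auto
qed

end
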